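(* For any finite set $D$ (with $|D|\ge2$) and any set $\Omega \subseteq \mathbf{W}^{\mathbb{R}}_D$ of weightings, we have $\mathrm{wPol}_{\mathbb{R}}(\mathrm{Imp}_{\mathbb{R}}(\Omega)) = \mathrm{wClone}_{\mathbb{R}}(\Omega)$.
   Context: Let $\overline{\mathbb{R}}=\mathbb{R}\cup\{\infty\}$. An $m$-ary weighted relation on $D$ is a map $\gamma:D^m\to\overline{\mathbb{R}}$; $\mathbf{\Phi}^{\mathbb{R}}_D$ is the set of all of them and $\mathrm{Feas}(\gamma)=\{\mathbf{x}:\gamma(\mathbf{x})<\infty\}$. A $k$-ary operation is $f:D^k\to D$, applied to tuples coordinatewise; $\mathbf{O}^{(k)}_D$ is the set of $k$-ary operations. $f$ is a polymorphism of $\gamma$ if $f(\mathbf{x}_1,\dots,\mathbf{x}_k)\in\mathrm{Feas}(\gamma)$ whenever all $\mathbf{x}_i\in\mathrm{Feas}(\gamma)$; $\mathrm{Pol}(\gamma)$ is the set of its polymorphisms. Projections: $e^{(k)}_i(x_1,\dots,x_k)=x_i$; $\mathbf{J}_D$ is the set of all projections, $\mathbf{J}_D^{(k)}$ the $k$-ary ones. Superposition of operations: $f[g_1,\dots,g_k](\mathbf{x})=f(g_1(\mathbf{x}),\dots,g_k(\mathbf{x}))$. A $k$-ary weighting is a function $\omega:\mathbf{O}^{(k)}_D\to\mathbb{R}$ with $\sum_f\omega(f)=0$ and $\omega(f)<0$ only if $f$ is a projection; $\mathbf{W}^{\mathbb{R}}_D$ is the set of all weightings. $\mathrm{supp}(\omega)=\mathbf{J}_D^{(k)}\cup\{f:\omega(f)>0\}$,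 and for a non-empty set $\Omega$ of weightings, $\mathrm{supp}(\Omega)=\mathbf{J}_D\cup\bigcup_{\omega\in\Omega}\mathrm{supp}(\omega)$. For $\omega:\mathbf{O}^{(k)}_D\to\mathbb{R}$ and $\ell$-ary $g_1,\dots,g_k$, the superposition $\omega[g_1,\dots,g_k]:\mathbf{O}^{(\ell)}_D\to\mathbb{R}$ is $\omega[g_1,\dots,g_k](f')=\sum_{f:f[g_1,\dots,g_k]=f'}\omega(f)$; it is proper if it is a weighting. Topology: the $k$-ary weightings lie in $\mathbb{R}^{\mathbf{O}^{(k)}_D}$ (Euclidean topology), and the set of all weightings carries the disjoint union topology over $k$. A weighted clone is a non-empty set $\Omega$ of weightings closed under scaling by non-negative reals, addition of weightings of equal arity, and proper superposition with operations from $\mathrm{supp}(\Omega)$, and topologically closed; $\mathrm{wClone}_{\mathbb{R}}(\Omega)$ is the smallest weighted clone containing $\Omega$. $\omega$ ($k$-ary) is a weighted polymorphism of $\gamma$ ($\gamma$ is improved by $\omega$) if $\mathrm{supp}(\omega)\subseteq\mathrm{Pol}(\gamma)$ and for all $\mathbf{x}_1,\dots,\mathbf{x}_k\in\mathrm{Feas}(\gamma)$, $\sum_{f\in\mathrm{supp}(\omega)}\omega(f)\gamma(f(\mathbf{x}_1,\dots,\mathbf{x}_k))\le0$. $\mathrm{Imp}_{\mathbb{R}}(\Omega)$ is the set of weighted relations in $\mathbf{\Phi}^{\mathbb{R}}_D$ improved by every $\omega\in\Omega$, and $\mathrm{wPol}_{\mathbb{R}}(\Gamma)$ is the set of weightings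 that are weighted polymorphisms of every $\gamma\in\Gamma$. *)

theory Defs
  imports "HOL-Analysis.Analysis" "HOL-Library.Extended_Real"
begin

text \<open>Domain D: a finite type 'a. An operation is tagged with its arity k:
  a pair (k, f) where f acts on lists of length k (tuples in D^k) and is
  canonically undefined on lists of other lengths.\<close>

type_synonym 'a oper = "nat \<times> ('a list \<Rightarrow> 'a)"

definition ops :: "nat \<Rightarrow> 'a oper set" where
  "ops k = {(k, f) | f. \<forall>xs. length xs \<noteq> k \<longrightarrow> f xs = undefined}"

definition proj :: "nat \<Rightarrow> nat \<Rightarrow> 'a oper" where
  "proj k i = (k, \<lambda>xs. if length xs = k then xs ! i else undefined)"

definition projs :: "nat \<Rightarrow> 'a oper set" where
  "projs k = {proj k i | i. i < k}"

definition all_projs :: "'a oper set" where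
  "all_projs = (\<Union>k. projs k)"

definition comp_op :: "'a oper \<Rightarrow> 'a oper list \<Rightarrow> nat \<Rightarrow> 'a oper" where
  "comp_op F gs l = (l, \<lambda>xs. if length xs = l
        then snd F (map (\<lambda>g. snd g xs) gs) else undefined)"

definition app_op :: "'a oper \<Rightarrow> nat \<Rightarrow> 'a list list \<Rightarrow> 'a list" where
  "app_op F m xs = map (\<lambda>j. snd F (map (\<lambda>x. x ! j) xs)) [0..<m]"

text \<open>A weighting is a pair (k, \<omega>), \<omega> : O^(k) \<rightarrow> R (extended by 0 outside O^(k)).\<close>
type_synonym 'a weighting = "nat \<times> ('a oper \<Rightarrow> real)"

definition is_weighting :: "'a weighting \<Rightarrow> bool" where
  "is_weighting W \<longleftrightarrow> (case W of (k, \<omega>) \<Rightarrow>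
      k \<ge> 1 \<and> (\<forall>f. f \<notin> ops k \<longrightarrow> \<omega> f = 0)
      \<and> sum \<omega> (ops k) = 0
      \<and> (\<forall>f \<in> ops k. \<omega> f < 0 \<longrightarrow> f \<in> projs k))"

definition weightings :: "'a weighting set" where
  "weightings = {W. is_weighting W}"

definition wsupp :: "'a weighting \<Rightarrow> 'a oper set" where
  "wsupp W = projs (fst W) \<union> {f. snd W f > 0}"

definition wsupp_set :: "'a weighting set \<Rightarrow> 'a oper set" where
  "wsupp_set C = all_projs \<union> (\<Union>W\<in>C. wsupp W)"

definition wsup :: "'a weighting \<Rightarrow> 'a oper list \<Rightarrow> nat \<Rightarrow> 'a weighting" where
  "wsup W gs l = (l, \<lambda>f'. \<Sum>f \<in> {f \<in> ops (fst W). comp_op f gs l = f'}. snd W f)"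

text \<open>Weighted clones (topology: product topology on functions, which on each
  arity slice is the Euclidean topology on R^(O^(k)); the disjoint union topology
  means closedness slicewise).\<close>
definition wclone :: "'a weighting set \<Rightarrow> bool" where
  "wclone C \<longleftrightarrow> C \<noteq> {} \<and> C \<subseteq> weightings
    \<and> (\<forall>(k, \<omega>) \<in> C. \<forall>c::real. c \<ge> 0 \<longrightarrow> (k, \<lambda>f. c * \<omega> f) \<in> C)
    \<and> (\<forall>(k, \<omega>1) \<in> C. \<forall>(k', \<omega>2) \<in> C. k = k' \<longrightarrow> (k, \<lambda>f. \<omega>1 f + \<omega>2 f) \<in> C)
    \<and> (\<forall>W \<in> C. \<forall>l gs. l \<ge> 1 \<longrightarrow> length gs = fst W \<longrightarrow>
          set gs \<subseteq> wsupp_set C \<inter> ops l \<longrightarrow>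
          is_weighting (wsup W gs l) \<longrightarrow> wsup W gs l \<in> C)
    \<and> (\<forall>k. closed {\<omega>. (k, \<omega>) \<in> C})"

definition wClone :: "'a weighting set \<Rightarrow> 'a weighting set" where
  "wClone \<Omega> = \<Inter>{C. wclone C \<and> \<Omega> \<subseteq> C}"

text \<open>Weighted relations of arity m \<ge> 1, values in R \<union> {\<infinity>} (ereal, never -\<infinity>),
  canonically \<infinity> off D^m.\<close>
type_synonym 'a wrel = "nat \<times> ('a list \<Rightarrow> ereal)"

definition wrels :: "'a wrel set" where
  "wrels = {(m, \<gamma>). m \<ge> 1 \<and> (\<forall>x. \<gamma> x \<noteq> -\<infinity>) \<and> (\<forall>x. length x \<noteq> m \<longrightarrow> \<gamma> x = \<infinity>)}"

definition feas :: "'a wrel \<Rightarrow> 'a list set" where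
  "feas R = {x. length x = fst R \<and> snd R x < \<infinity>}"

definition Pol :: "'a wrel \<Rightarrow> 'a oper set" where
  "Pol R = {F. \<exists>k. F \<in> ops k \<and> (\<forall>xs. length xs = k \<longrightarrow> set xs \<subseteq> feas R
              \<longrightarrow> app_op F (fst R) xs \<in> feas R)}"

definition improves :: "'a weighting \<Rightarrow> 'a wrel \<Rightarrow> bool" where
  "improves W R \<longleftrightarrow> wsupp W \<subseteq> Pol R \<and>
     (\<forall>xs. length xs = fst W \<longrightarrow> set xs \<subseteq> feas R \<longrightarrow>
        (\<Sum>f \<in> wsupp W. ereal (snd W f) * snd R (app_op f (fst R) xs)) \<le> 0)"

definition Imp :: "'a weighting set \<Rightarrow> 'a wrel set" where
  "Imp \<Omega> = {R \<in> wrels. \<forall>W \<in> \<Omega>. improves W R}"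

definition wPol :: "'a wrel set \<Rightarrow> 'a weighting set" where
  "wPol \<Gamma> = {W \<in> weightings. \<forall>R \<in> \<Gamma>. improves W R}"

end

theory Submission
  imports Defs
begin

(* Weighted polymorphisms of any set of weighted relations form a weighted clone, which gives
   wClone \<Omega> \<subseteq> wPol (Imp \<Omega>).

   Conversely let C \<supseteq> \<Omega> be a weighted clone and \<omega> a k-ary weighting outside C. Superposing
   the weightings of C with k-ary operations from supp C yields a convex cone L of functions on
   the finite set of k-ary operations. Adding a suitable multiple of one weighting of C that is
   positive on all non-projections of supp C maps L continuously into C and fixes weightings,
   and C is closed; hence \<omega> is not in the closure of L, and a separating functional \<gamma> exists.
   The weighted relation on D^(|D|^k) whose feasible tuples are the truth tables of the k-ary
   operations of supp C, the table of h costing \<gamma> h, is improved by every weighting of C (so it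
   lies in Imp \<Omega>) but not by \<omega>. *)

section \<open>Separating a point from a closed convex cone\<close>

lemma linear_nonpos_if_quadratic_nonneg:
  fixes a b :: real
  assumes quad: "\<And>t. 0 < t \<Longrightarrow> t \<le> 1 \<Longrightarrow> 0 \<le> t\<^sup>2 * b - 2 * t * a" and "0 \<le> b"
  shows "a \<le> 0"
proof (rule ccontr)
  assume "\<not> a \<le> 0"
  define t where "t = a / (a + b)"
  have t: "0 < t" "t \<le> 1" using \<open>\<not> a \<le> 0\<close> \<open>0 \<le> b\<close> by (auto simp: t_def)
  have "t * b = a * (b / (a + b))" by (simp add: t_def)
  also have "\<dots> \<le> a" using \<open>\<not> a \<le> 0\<close> \<open>0 \<le> b\<close> by (intro mult_left_le) auto
  finally have "t * b \<le> a" .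
  have "0 \<le> t * (t * b - 2 * a)"
    using quad[OF t] by (simp add: power2_eq_square algebra_simps)
  then have "0 \<le> t * b - 2 * a" using t by (simp add: zero_le_mult_iff)
  with \<open>t * b \<le> a\<close> \<open>\<not> a \<le> 0\<close> show False by linarith
qed

lemma compact_box_on:
  fixes B :: real
  shows "compact {v::'x \<Rightarrow> real. \<forall>x. v x \<in> (if x \<in> X then {-B..B} else {0})}"
proof -
  have "{v::'x \<Rightarrow> real. \<forall>x. v x \<in> (if x \<in> X then {-B..B} else {0})}
      = PiE UNIV (\<lambda>x. if x \<in> X then {-B..B} else {0})"
    by (auto simp: PiE_def Pi_def)
  moreover have "compactin (product_topology (\<lambda>_. euclidean) UNIV)
      (PiE UNIV (\<lambda>x. if x \<in> X then {-B..B::real} else {0}))"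
    by (subst compactin_PiE) auto
  ultimately show ?thesis by (simp add: euclidean_product_topology)
qed

lemma nearest_point_on_finite_support:
  fixes S :: "('x \<Rightarrow> real) set" and z :: "'x \<Rightarrow> real"
  assumes X: "finite X" and "closed S" "(\<lambda>_. 0) \<in> S"
    and S_supp: "\<And>v x. v \<in> S \<Longrightarrow> x \<notin> X \<Longrightarrow> v x = 0"
  obtains p where "p \<in> S"
    "\<And>y. y \<in> S \<Longrightarrow> (\<Sum>x\<in>X. (z x - p x)\<^sup>2) \<le> (\<Sum>x\<in>X. (z x - y x)\<^sup>2)"
proof -
  define F where "F v = (\<Sum>x\<in>X. (z x - v x)\<^sup>2)" for v :: "'x \<Rightarrow> real"
  define r where "r = F (\<lambda>_. 0)"
  define M where "M = (\<Sum>x\<in>X. \<bar>z x\<bar>)"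
  define B where "B = M + r + 1"
  define Box where "Box = {v::'x \<Rightarrow> real. \<forall>x. v x \<in> (if x \<in> X then {-B..B} else {0})}"
  have r: "0 \<le> r" by (simp add: r_def F_def sum_nonneg)
  have M: "0 \<le> M" by (simp add: M_def sum_nonneg)
  have far: "r < F y" if "y \<in> S" "y \<notin> Box" for y
  proof -
    obtain x0 where "y x0 \<notin> (if x0 \<in> X then {-B..B} else {0})"
      using \<open>y \<notin> Box\<close> by (auto simp: Box_def)
    moreover from this have "x0 \<in> X" using S_supp[OF \<open>y \<in> S\<close>, of x0] by (cases "x0 \<in> X") auto
    ultimately have x0: "x0 \<in> X" "B < \<bar>y x0\<bar>" by auto
    have "\<bar>z x0\<bar> \<le> M" unfolding M_def using X x0(1) by (intro member_le_sum) auto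
    then have gt: "r + 1 < \<bar>z x0 - y x0\<bar>" using x0(2) by (simp add: B_def)
    then have "\<bar>z x0 - y x0\<bar> \<le> \<bar>z x0 - y x0\<bar>\<^sup>2"
      using r by (intro self_le_power) auto
    then have "r < (z x0 - y x0)\<^sup>2" using gt by simp
    also have "\<dots> \<le> F y" unfolding F_def using X x0(1) by (intro member_le_sum) auto
    finally show ?thesis .
  qed
  have "compact (S \<inter> Box)"
    unfolding Box_def by (intro closed_Int_compact compact_box_on \<open>closed S\<close>)
  moreover have "(\<lambda>_. 0) \<in> S \<inter> Box"
    using \<open>(\<lambda>_. 0) \<in> S\<close> r M by (auto simp: Box_def B_def)
  moreover have "continuous_on (S \<inter> Box) F"
    unfolding F_def by (intro continuous_intros continuous_on_product_then_coordinatewise)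
  ultimately obtain p where p: "p \<in> S \<inter> Box" and min: "\<And>y. y \<in> S \<inter> Box \<Longrightarrow> F p \<le> F y"
    using continuous_attains_inf[of "S \<inter> Box" F] by blast
  have "F p \<le> F y" if "y \<in> S" for y
  proof (cases "y \<in> Box")
    case False
    then show ?thesis using min[of "\<lambda>_. 0"] \<open>(\<lambda>_. 0) \<in> S \<inter> Box\<close> far[OF that] r_def by force
  qed (use min that in blast)
  then show thesis using p that unfolding F_def by blast
qed

(* The separating functional is z - p for the point p of closure K nearest to z. *)

lemma separation_closed_cone:
  fixes K :: "('x \<Rightarrow> real) set" and z :: "'x \<Rightarrow> real"
  assumes X: "finite X"
    and K_supp: "\<And>v x. v \<in> K \<Longrightarrow> x \<notin> X \<Longrightarrow> v x = 0"
    and K_zero: "(\<lambda>_. 0) \<in> K"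
    and K_add: "\<And>u v. u \<in> K \<Longrightarrow> v \<in> K \<Longrightarrow> (\<lambda>x. u x + v x) \<in> K"
    and K_scale: "\<And>v c. v \<in> K \<Longrightarrow> 0 \<le> c \<Longrightarrow> (\<lambda>x. c * v x) \<in> K"
    and z_supp: "\<And>x. x \<notin> X \<Longrightarrow> z x = 0"
    and z_notin: "z \<notin> closure K"
  obtains \<gamma> where "\<And>v. v \<in> K \<Longrightarrow> (\<Sum>x\<in>X. v x * \<gamma> x) \<le> 0" "0 < (\<Sum>x\<in>X. z x * \<gamma> x)"
proof -
  have closure_supp: "v x = 0" if "v \<in> closure K" "x \<notin> X" for v x
  proof -
    have "closed {v::'x \<Rightarrow> real. \<forall>x. x \<notin> X \<longrightarrow> v x = 0}"
      by (intro closed_Collect_all closed_Collect_imp closed_Collect_eq continuous_on_product_coordinates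
          continuous_on_const) auto
    then have "closure K \<subseteq> {v. \<forall>x. x \<notin> X \<longrightarrow> v x = 0}"
      using K_supp by (intro closure_minimal) auto
    then show ?thesis using that by blast
  qed
  have closure_stable: "g u \<in> closure K"
    if "continuous_on UNIV g" "\<And>u. u \<in> K \<Longrightarrow> g u \<in> K" "u \<in> closure K" for g u
    using image_closure_subset[of K g "closure K"] that closure_subset
    by (auto intro: continuous_on_subset)
  obtain p where p: "p \<in> closure K"
    and p_min: "\<And>y. y \<in> closure K \<Longrightarrow> (\<Sum>x\<in>X. (z x - p x)\<^sup>2) \<le> (\<Sum>x\<in>X. (z x - y x)\<^sup>2)"
  proof (rule nearest_point_on_finite_support[OF X closed_closure, where z = z])
    show "(\<lambda>_. 0) \<in> closure K" using K_zero closure_subset by blast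
  qed (use closure_supp in blast)+
  define d where "d x = z x - p x" for x
  have nonpos: "(\<Sum>x\<in>X. v x * d x) \<le> 0"
    if v: "\<And>t. 0 < t \<Longrightarrow> t \<le> 1 \<Longrightarrow> (\<lambda>x. p x + t * v x) \<in> closure K" for v
  proof (rule linear_nonpos_if_quadratic_nonneg)
    fix t :: real assume "0 < t" "t \<le> 1"
    have "(\<Sum>x\<in>X. (z x - p x)\<^sup>2) \<le> (\<Sum>x\<in>X. (z x - (p x + t * v x))\<^sup>2)"
      using p_min v[OF \<open>0 < t\<close> \<open>t \<le> 1\<close>] by blast
    also have "\<dots> = (\<Sum>x\<in>X. (z x - p x)\<^sup>2 + (t\<^sup>2 * (v x)\<^sup>2 - 2 * t * (v x * d x)))"
      by (intro sum.cong) (simp_all add: d_def power2_eq_square algebra_simps)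
    finally show "0 \<le> t\<^sup>2 * (\<Sum>x\<in>X. (v x)\<^sup>2) - 2 * t * (\<Sum>x\<in>X. v x * d x)"
      by (simp add: sum.distrib sum_subtractf sum_distrib_left)
  qed (simp add: sum_nonneg)
  have K_sep: "(\<Sum>x\<in>X. v x * d x) \<le> 0" if "v \<in> K" for v
  proof (rule nonpos)
    fix t :: real assume "0 < t"
    have "continuous_on UNIV (\<lambda>u::'x \<Rightarrow> real. \<lambda>x. u x + t * v x)"
      by (intro continuous_on_coordinatewise_then_product continuous_intros) simp
    from closure_stable[OF this _ p] show "(\<lambda>x. p x + t * v x) \<in> closure K"
      using K_add K_scale \<open>v \<in> K\<close> \<open>0 < t\<close> by simp
  qed
  have p_scale: "(\<lambda>x. c * p x) \<in> closure K" if "0 \<le> c" for c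
  proof -
    have "continuous_on UNIV (\<lambda>u::'x \<Rightarrow> real. \<lambda>x. c * u x)"
      by (intro continuous_on_coordinatewise_then_product continuous_intros) simp
    from closure_stable[OF this _ p] show ?thesis using K_scale \<open>0 \<le> c\<close> by simp
  qed
  have "(\<Sum>x\<in>X. p x * d x) \<le> 0"
    using p_scale[of "1 + t" for t] by (intro nonpos) (simp add: algebra_simps)
  moreover have "(\<Sum>x\<in>X. - p x * d x) \<le> 0"
    using p_scale[of "1 - t" for t] by (intro nonpos) (simp add: algebra_simps)
  ultimately have pd: "(\<Sum>x\<in>X. p x * d x) = 0" by (simp add: sum_negf)
  have "z \<noteq> p" using z_notin p by blast
  then obtain x0 where "x0 \<in> X" "d x0 \<noteq> 0"
    using z_supp closure_supp[OF p] by (force simp: d_def fun_eq_iff)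
  then have "0 < (\<Sum>x\<in>X. (d x)\<^sup>2)" using X by (intro sum_pos2) auto
  also have "\<dots> = (\<Sum>x\<in>X. z x * d x) - (\<Sum>x\<in>X. p x * d x)"
    by (simp add: sum_subtractf[symmetric] d_def power2_eq_square algebra_simps)
  finally have "0 < (\<Sum>x\<in>X. z x * d x)" using pd by simp
  with K_sep show thesis by (rule that)
qed

lemma ops_fst: "f \<in> ops k \<Longrightarrow> fst f = k"
  by (auto simp: ops_def)

lemma ops_eqI:
  assumes "F \<in> ops k" "G \<in> ops k" "\<And>xs. length xs = k \<Longrightarrow> snd F xs = snd G xs"
  shows "F = G"
proof -
  have "snd F xs = snd G xs" for xs
    using assms by (cases "length xs = k") (auto simp: ops_def)
  then show ?thesis using assms by (auto simp: ops_def fun_eq_iff)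
qed

lemma finite_ops: "finite (ops k :: ('a::finite) oper set)"
proof -
  have "ops k = (\<lambda>f. (k, f)) ` (PiE {xs::'a list. length xs = k} (\<lambda>_. UNIV))"
    by (auto simp: ops_def PiE_def extensional_def image_iff)
  then show ?thesis
    using finite_lists_length_eq[of "UNIV::'a set" k] by (simp add: finite_PiE)
qed

lemma proj_in_ops: "proj k i \<in> ops k"
  by (auto simp: proj_def ops_def)

lemma projs_subset_ops: "projs k \<subseteq> ops k"
  by (auto simp: projs_def proj_in_ops)

lemma proj_in_projs: "i < k \<Longrightarrow> proj k i \<in> projs k"
  by (auto simp: projs_def)

lemma projs_subset_all_projs: "projs k \<subseteq> all_projs"
  by (auto simp: all_projs_def)

lemma all_projs_Int_ops: "f \<in> all_projs \<Longrightarrow> f \<in> ops k \<Longrightarrow> f \<in> projs k"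
  by (auto simp: all_projs_def projs_def proj_def ops_def)

lemma comp_op_in_ops: "comp_op F gs l \<in> ops l"
  by (auto simp: comp_op_def ops_def)

lemma comp_op_proj:
  assumes "i < length gs" "gs ! i \<in> ops l"
  shows "comp_op (proj (length gs) i) gs l = gs ! i"
  using assms by (intro ops_eqI[OF comp_op_in_ops]) (auto simp: comp_op_def proj_def)

lemma comp_op_projs_right:
  assumes "f \<in> ops k"
  shows "comp_op f (map (proj k) [0..<k]) k = f"
proof (rule ops_eqI[OF comp_op_in_ops assms])
  fix xs :: "'a list" assume "length xs = k"
  then have "map (\<lambda>g. snd g xs) (map (proj k) [0..<k]) = xs"
    by (auto simp: proj_def intro: nth_equalityI)
  with \<open>length xs = k\<close> show "snd (comp_op f (map (proj k) [0..<k]) k) xs = snd f xs"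
    by (simp add: comp_op_def)
qed

lemma comp_op_assoc:
  "length gs = N \<Longrightarrow> comp_op (comp_op f hs N) gs l = comp_op f (map (\<lambda>h. comp_op h gs l) hs) l"
  by (auto simp: comp_op_def fun_eq_iff o_def)

lemma app_op_comp_op:
  "length xs = l \<Longrightarrow> app_op (comp_op f gs l) m xs = app_op f m (map (\<lambda>g. app_op g m xs) gs)"
  by (auto simp: app_op_def comp_op_def o_def)

lemma app_op_proj:
  "i < length xs \<Longrightarrow> length (xs ! i) = m \<Longrightarrow> app_op (proj (length xs) i) m xs = xs ! i"
  by (auto simp: app_op_def proj_def intro: nth_equalityI)

lemma is_weightingD:
  assumes "is_weighting (k, \<omega>)"
  shows "1 \<le> k" "\<And>f. f \<notin> ops k \<Longrightarrow> \<omega> f = 0" "sum \<omega> (ops k) = 0"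
    "\<And>f. f \<in> ops k \<Longrightarrow> \<omega> f < 0 \<Longrightarrow> f \<in> projs k"
  using assms by (auto simp: is_weighting_def)

lemma is_weightingI:
  assumes "1 \<le> k" "\<And>f. f \<notin> ops k \<Longrightarrow> \<omega> f = 0" "sum \<omega> (ops k) = 0"
    "\<And>f. f \<in> ops k \<Longrightarrow> f \<notin> projs k \<Longrightarrow> 0 \<le> \<omega> f"
  shows "is_weighting (k, \<omega>)"
  using assms unfolding is_weighting_def by force

lemma weighting_nonneg:
  assumes "is_weighting (k, \<omega>)" "f \<notin> projs k"
  shows "0 \<le> \<omega> f"
  using is_weightingD(2,4)[OF assms(1), of f] assms(2) by (cases "f \<in> ops k") (auto intro: leI)

lemma wsupp_subset_ops: "is_weighting (k, \<omega>) \<Longrightarrow> wsupp (k, \<omega>) \<subseteq> ops k"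
  using is_weightingD(2)[of k \<omega>] projs_subset_ops by (force simp: wsupp_def)

lemma weighting_eq_0_off_wsupp:
  "is_weighting (k, \<omega>) \<Longrightarrow> f \<notin> wsupp (k, \<omega>) \<Longrightarrow> \<omega> f = 0"
  using weighting_nonneg[of k \<omega> f] by (auto simp: wsupp_def)

lemma is_weighting_zero: "1 \<le> k \<Longrightarrow> is_weighting (k, \<lambda>_. 0)"
  by (rule is_weightingI) auto

lemma is_weighting_scale:
  assumes "is_weighting (k, \<omega>)" "0 \<le> c"
  shows "is_weighting (k, \<lambda>f. c * \<omega> f)"
  using is_weightingD[OF assms(1)] weighting_nonneg[OF assms(1)] assms(2)
  by (intro is_weightingI) (auto simp: sum_distrib_left[symmetric])

lemma is_weighting_add:
  assumes "is_weighting (k, \<omega>1)" "is_weighting (k, \<omega>2)"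
  shows "is_weighting (k, \<lambda>f. \<omega>1 f + \<omega>2 f)"
  using is_weightingD[OF assms(1)] is_weightingD[OF assms(2)]
    weighting_nonneg[OF assms(1)] weighting_nonneg[OF assms(2)]
  by (intro is_weightingI) (auto simp: sum.distrib)

lemma closed_weightings:
  "closed {\<omega> :: ('a::finite) oper \<Rightarrow> real. is_weighting (k, \<omega>)}"
proof (cases "1 \<le> k")
  case True
  then have "{\<omega> :: 'a oper \<Rightarrow> real. is_weighting (k, \<omega>)} =
      {\<omega>. (\<forall>f. f \<notin> ops k \<longrightarrow> \<omega> f = 0) \<and> sum \<omega> (ops k) = 0
        \<and> (\<forall>f. f \<in> ops k \<longrightarrow> f \<notin> projs k \<longrightarrow> 0 \<le> \<omega> f)}"
    by (auto simp: is_weighting_def not_le[symmetric])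
  also have "closed \<dots>"
    by (intro closed_Collect_conj closed_Collect_all closed_Collect_imp closed_Collect_eq
        closed_Collect_le continuous_on_product_coordinates continuous_on_const continuous_on_sum)
      auto
  finally show ?thesis .
qed (auto simp: is_weighting_def)

lemma fst_wsup: "wsup W gs l = (l, snd (wsup W gs l))"
  by (simp add: wsup_def)

lemma wsup_eq_0_off_ops: "f' \<notin> ops l \<Longrightarrow> snd (wsup W gs l) f' = 0"
  using comp_op_in_ops[of _ gs l] by (auto simp: wsup_def intro!: sum.neutral)

lemma sum_wsup_times:
  fixes gs :: "('a::finite) oper list"
  shows "(\<Sum>f'\<in>ops l. snd (wsup (n, \<mu>) gs l) f' * c f') = (\<Sum>f\<in>ops n. \<mu> f * c (comp_op f gs l))"
proof -
  have "(\<Sum>f'\<in>ops l. snd (wsup (n, \<mu>) gs l) f' * c f')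
      = (\<Sum>f'\<in>ops l. \<Sum>f\<in>{f \<in> ops n. comp_op f gs l = f'}. \<mu> f * c (comp_op f gs l))"
    by (simp add: wsup_def sum_distrib_right)
  also have "\<dots> = (\<Sum>f\<in>ops n. \<mu> f * c (comp_op f gs l))"
    by (rule sum.group) (auto simp: finite_ops comp_op_in_ops)
  finally show ?thesis .
qed

lemma sum_wsup:
  fixes gs :: "('a::finite) oper list"
  shows "sum (snd (wsup (n, \<mu>) gs l)) (ops l) = sum \<mu> (ops n)"
  using sum_wsup_times[where c = "\<lambda>_. 1"] by simp

lemma wsup_wsup:
  fixes gs :: "('a::finite) oper list"
  assumes "length gs = N"
  shows "wsup (wsup (n, \<mu>) hs N) gs l = wsup (n, \<mu>) (map (\<lambda>h. comp_op h gs l) hs) l"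
proof -
  let ?indicator = "\<lambda>f'' g. if g = f'' then 1 else 0 :: real"
  have "snd (wsup (wsup (n, \<mu>) hs N) gs l) f''
      = (\<Sum>f'\<in>ops N. snd (wsup (n, \<mu>) hs N) f' * ?indicator f'' (comp_op f' gs l))" for f''
    by (simp add: wsup_def sum.inter_filter[symmetric] finite_ops if_distrib cong: if_cong)
  also have "\<dots> f'' = (\<Sum>f\<in>ops n. \<mu> f * ?indicator f'' (comp_op (comp_op f hs N) gs l))" for f''
    by (rule sum_wsup_times)
  also have "\<dots> f'' = snd (wsup (n, \<mu>) (map (\<lambda>h. comp_op h gs l) hs) l) f''" for f''
    using assms
    by (simp add: wsup_def comp_op_assoc sum.inter_filter[symmetric] finite_ops if_distrib cong: if_cong)
  finally show ?thesis by (simp add: wsup_def fun_eq_iff)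
qed

lemma wsup_add:
  "wsup (n, \<lambda>f. \<mu>1 f + \<mu>2 f) gs l = (l, \<lambda>f. snd (wsup (n, \<mu>1) gs l) f + snd (wsup (n, \<mu>2) gs l) f)"
  by (simp add: wsup_def sum.distrib)

lemma wsup_scale:
  "wsup (n, \<lambda>f. c * \<mu> f) gs l = (l, \<lambda>f. c * snd (wsup (n, \<mu>) gs l) f)"
  by (simp add: wsup_def sum_distrib_left)

lemma wsup_projs_right:
  assumes "is_weighting (k, \<omega>)"
  shows "wsup (k, \<omega>) (map (proj k) [0..<k]) k = (k, \<omega>)"
proof -
  have "snd (wsup (k, \<omega>) (map (proj k) [0..<k]) k) f' = \<omega> f'" for f'
  proof (cases "f' \<in> ops k")
    case True
    then have "{f \<in> ops k. comp_op f (map (proj k) [0..<k]) k = f'} = {f'}"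
      using comp_op_projs_right by auto
    then show ?thesis by (simp add: wsup_def)
  qed (simp add: wsup_eq_0_off_ops is_weightingD(2)[OF assms])
  then show ?thesis by (subst fst_wsup) (simp add: fun_eq_iff)
qed

lemma wsup_reindex:
  fixes gs :: "('a::finite) oper list"
  assumes "length gs = N" "set gs \<subseteq> ops l" "\<And>i. i < n \<Longrightarrow> \<sigma> i < N"
  shows "wsup (wsup W (map (\<lambda>i. proj N (\<sigma> i)) [0..<n]) N) gs l
    = wsup W (map (\<lambda>i. gs ! \<sigma> i) [0..<n]) l"
proof -
  have "comp_op (proj N (\<sigma> i)) gs l = gs ! \<sigma> i" if "i < n" for i
    using assms that comp_op_proj[of "\<sigma> i" gs l] by (metis nth_mem subsetD)
  then have "map (\<lambda>i. comp_op (proj N (\<sigma> i)) gs l) [0..<n] = map (\<lambda>i. gs ! \<sigma> i) [0..<n]"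
    by simp
  then show ?thesis
    using wsup_wsup[OF assms(1), of "fst W" "snd W" "map (\<lambda>i. proj N (\<sigma> i)) [0..<n]" l]
    by (simp only: prod.collapse map_map o_def)
qed

(* Negative weights sit on projections, and a projection superposes to one of the gs. *)

lemma wsup_fiber_nonneg:
  assumes "is_weighting (n, \<mu>)" "length gs = n" "set gs \<subseteq> ops l" "comp_op f gs l \<notin> set gs"
    "f \<in> ops n"
  shows "0 \<le> \<mu> f"
proof (rule ccontr)
  assume "\<not> 0 \<le> \<mu> f"
  then obtain i where i: "i < n" "f = proj n i"
    using is_weightingD(4)[OF assms(1) assms(5)] by (auto simp: projs_def)
  then have "comp_op f gs l = gs ! i"
    using assms(2,3) comp_op_proj[of i gs l] by (metis nth_mem subsetD)
  then show False using assms(2,4) i by simp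
qed

lemma wsup_nonneg_off:
  fixes gs :: "('a::finite) oper list"
  assumes "is_weighting (n, \<mu>)" "length gs = n" "set gs \<subseteq> ops l" "h \<notin> set gs"
  shows "0 \<le> snd (wsup (n, \<mu>) gs l) h"
  unfolding wsup_def using wsup_fiber_nonneg[OF assms(1-3)] assms(4) by (auto intro: sum_nonneg)

lemma is_weighting_wsup_projs:
  fixes gs :: "('a::finite) oper list"
  assumes W: "is_weighting (n, \<mu>)" and "1 \<le> l" "length gs = n" "set gs \<subseteq> projs l"
  shows "is_weighting (wsup (n, \<mu>) gs l)"
proof (subst fst_wsup, rule is_weightingI)
  have "set gs \<subseteq> ops l" using assms(4) projs_subset_ops by blast
  then show "0 \<le> snd (wsup (n, \<mu>) gs l) f" if "f \<notin> projs l" for f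
    using wsup_nonneg_off[OF W assms(3)] that assms(4) by blast
  show "sum (snd (wsup (n, \<mu>) gs l)) (ops l) = 0"
    using sum_wsup[of n \<mu> gs l] is_weightingD(3)[OF W] by simp
qed (use assms wsup_eq_0_off_ops in auto)

section \<open>Weighted polymorphisms form a weighted clone\<close>

definition cost_at :: "'a wrel \<Rightarrow> 'a oper \<Rightarrow> 'a list list \<Rightarrow> real" where
  "cost_at R f xs = real_of_ereal (snd R (app_op f (fst R) xs))"

lemma Pol_iff:
  assumes "F \<in> ops k"
  shows "F \<in> Pol R \<longleftrightarrow>
    (\<forall>xs. length xs = k \<longrightarrow> set xs \<subseteq> feas R \<longrightarrow> app_op F (fst R) xs \<in> feas R)"
proof -
  have "F \<in> ops k' \<longleftrightarrow> k' = k" for k' using assms by (auto dest: ops_fst)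
  then show ?thesis by (simp add: Pol_def)
qed

lemma projs_subset_Pol: "projs k \<subseteq> Pol (R :: 'a wrel)"
proof
  fix f :: "'a oper" assume "f \<in> projs k"
  then obtain i where i: "i < k" "f = proj k i" by (auto simp: projs_def)
  show "f \<in> Pol R" unfolding Pol_iff[OF projs_subset_ops[THEN subsetD, OF \<open>f \<in> projs k\<close>]]
  proof (intro allI impI)
    fix xs :: "'a list list" assume xs: "length xs = k" "set xs \<subseteq> feas R"
    then have "xs ! i \<in> feas R" using i by auto
    then show "app_op f (fst R) xs \<in> feas R"
      using app_op_proj[of i xs "fst R"] i xs by (simp add: feas_def)
  qed
qed

lemma app_ops_in_feas:
  assumes "set gs \<subseteq> Pol R \<inter> ops l" "length xs = l" "set xs \<subseteq> feas R"
  shows "set (map (\<lambda>g. app_op g (fst R) xs) gs) \<subseteq> feas R"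
proof
  fix y assume "y \<in> set (map (\<lambda>g. app_op g (fst R) xs) gs)"
  then obtain g where "g \<in> set gs" "y = app_op g (fst R) xs" by auto
  with assms show "y \<in> feas R" using Pol_iff[of g l R] by blast
qed

lemma comp_op_in_Pol:
  assumes "f \<in> Pol R" "f \<in> ops n" "set gs \<subseteq> Pol R \<inter> ops l" "length gs = n"
  shows "comp_op f gs l \<in> Pol R"
  unfolding Pol_iff[OF comp_op_in_ops]
  using assms app_ops_in_feas[OF assms(3)] by (simp add: Pol_iff app_op_comp_op)

(* Once the support consists of polymorphisms, every cost in the sum defining improves is
   finite, so improvement is a system of linear inequalities in the weights. *)

lemma improves_iff:
  fixes \<omega> :: "('a::finite) oper \<Rightarrow> real"
  assumes W: "is_weighting (k, \<omega>)" and R: "R \<in> wrels"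
  shows "improves (k, \<omega>) R \<longleftrightarrow> (\<forall>f\<in>ops k. f \<notin> Pol R \<longrightarrow> \<omega> f \<le> 0) \<and>
     (\<forall>xs. length xs = k \<longrightarrow> set xs \<subseteq> feas R \<longrightarrow> (\<Sum>f\<in>ops k. \<omega> f * cost_at R f xs) \<le> 0)"
proof -
  have supp_iff: "wsupp (k, \<omega>) \<subseteq> Pol R \<longleftrightarrow> (\<forall>f\<in>ops k. f \<notin> Pol R \<longrightarrow> \<omega> f \<le> 0)"
    using projs_subset_Pol is_weightingD(2)[OF W] by (fastforce simp: wsupp_def not_le)
  have sum_eq: "(\<Sum>f \<in> wsupp (k, \<omega>). ereal (\<omega> f) * snd R (app_op f (fst R) xs))
      = ereal (\<Sum>f\<in>ops k. \<omega> f * cost_at R f xs)"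
    if sub: "wsupp (k, \<omega>) \<subseteq> Pol R" and xs: "length xs = k" "set xs \<subseteq> feas R" for xs
  proof -
    have "snd R (app_op f (fst R) xs) = ereal (cost_at R f xs)" if "f \<in> wsupp (k, \<omega>)" for f
    proof -
      have "app_op f (fst R) xs \<in> feas R"
        using that sub xs wsupp_subset_ops[OF W] Pol_iff by blast
      then show ?thesis using R
        by (cases "snd R (app_op f (fst R) xs)") (auto simp: feas_def wrels_def cost_at_def)
    qed
    then have "(\<Sum>f \<in> wsupp (k, \<omega>). ereal (\<omega> f) * snd R (app_op f (fst R) xs))
        = ereal (\<Sum>f \<in> wsupp (k, \<omega>). \<omega> f * cost_at R f xs)"
      by simp
    also have "(\<Sum>f \<in> wsupp (k, \<omega>). \<omega> f * cost_at R f xs) = (\<Sum>f\<in>ops k. \<omega> f * cost_at R f xs)"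
      using wsupp_subset_ops[OF W] weighting_eq_0_off_wsupp[OF W]
      by (intro sum.mono_neutral_left finite_ops) auto
    finally show ?thesis .
  qed
  show ?thesis unfolding improves_def fst_conv using supp_iff sum_eq by auto
qed

lemma improves_scale:
  fixes \<omega> :: "('a::finite) oper \<Rightarrow> real"
  assumes "is_weighting (k, \<omega>)" "R \<in> wrels" "improves (k, \<omega>) R" "0 \<le> c"
  shows "improves (k, \<lambda>f. c * \<omega> f) R"
  using assms
  by (auto simp: improves_iff is_weighting_scale mult_nonneg_nonpos mult.assoc
      sum_distrib_left[symmetric])

lemma improves_add:
  fixes \<omega>1 :: "('a::finite) oper \<Rightarrow> real"
  assumes "is_weighting (k, \<omega>1)" "is_weighting (k, \<omega>2)" "R \<in> wrels"
    "improves (k, \<omega>1) R" "improves (k, \<omega>2) R"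
  shows "improves (k, \<lambda>f. \<omega>1 f + \<omega>2 f) R"
  using assms
  by (auto simp: improves_iff is_weighting_add distrib_right sum.distrib add_nonpos_nonpos)

lemma improves_wsup:
  fixes gs :: "('a::finite) oper list"
  assumes W: "is_weighting (n, \<mu>)" "improves (n, \<mu>) R" and R: "R \<in> wrels"
    and gs: "set gs \<subseteq> Pol R \<inter> ops l" "length gs = n"
    and W': "is_weighting (wsup (n, \<mu>) gs l)"
  shows "improves (wsup (n, \<mu>) gs l) R"
proof -
  define \<nu> where "\<nu> = snd (wsup (n, \<mu>) gs l)"
  have W'': "is_weighting (l, \<nu>)" using W' by (subst (asm) fst_wsup) (simp add: \<nu>_def)
  have \<mu>: "\<forall>f\<in>ops n. f \<notin> Pol R \<longrightarrow> \<mu> f \<le> 0"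
    "\<And>xs. length xs = n \<Longrightarrow> set xs \<subseteq> feas R \<Longrightarrow> (\<Sum>f\<in>ops n. \<mu> f * cost_at R f xs) \<le> 0"
    using W by (auto simp: improves_iff[OF W(1) R])
  have "\<nu> h \<le> 0" if "h \<in> ops l" "h \<notin> Pol R" for h
  proof (rule ccontr)
    assume "\<not> \<nu> h \<le> 0"
    then have "0 < (\<Sum>f\<in>{f \<in> ops n. comp_op f gs l = h}. \<mu> f)" by (simp add: \<nu>_def wsup_def)
    then have "\<exists>f\<in>{f \<in> ops n. comp_op f gs l = h}. 0 < \<mu> f" by (meson not_le sum_nonpos)
    then obtain f where f: "f \<in> ops n" "comp_op f gs l = h" "0 < \<mu> f" by blast
    then have "f \<in> Pol R" using \<mu>(1) by fastforce
    then show False using comp_op_in_Pol[OF _ f(1) gs] f(2) that(2) by blast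
  qed
  moreover have "(\<Sum>h\<in>ops l. \<nu> h * cost_at R h xs) \<le> 0"
    if xs: "length xs = l" "set xs \<subseteq> feas R" for xs
  proof -
    have "(\<Sum>h\<in>ops l. \<nu> h * cost_at R h xs)
        = (\<Sum>f\<in>ops n. \<mu> f * cost_at R f (map (\<lambda>g. app_op g (fst R) xs) gs))"
      unfolding \<nu>_def sum_wsup_times using xs(1) by (simp add: cost_at_def app_op_comp_op)
    also have "\<dots> \<le> 0" using \<mu>(2) app_ops_in_feas[OF gs(1) xs] gs(2) by simp
    finally show ?thesis .
  qed
  ultimately have "improves (l, \<nu>) R" using improves_iff[OF W'' R] by blast
  then show ?thesis by (subst fst_wsup) (simp add: \<nu>_def)
qed

lemma closed_improving:
  fixes R :: "('a::finite) wrel"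
  assumes R: "R \<in> wrels"
  shows "closed {\<omega>. is_weighting (k, \<omega>) \<and> improves (k, \<omega>) R}"
proof -
  have "{\<omega>. is_weighting (k, \<omega>) \<and> improves (k, \<omega>) R} = {\<omega>. is_weighting (k, \<omega>)} \<inter>
      {\<omega>. (\<forall>f. f \<in> ops k \<longrightarrow> f \<notin> Pol R \<longrightarrow> \<omega> f \<le> 0) \<and>
        (\<forall>xs. length xs = k \<longrightarrow> set xs \<subseteq> feas R \<longrightarrow> (\<Sum>f\<in>ops k. \<omega> f * cost_at R f xs) \<le> 0)}"
    using improves_iff[OF _ R] by blast
  also have "closed \<dots>"
    by (intro closed_Int closed_weightings closed_Collect_conj closed_Collect_all closed_Collect_imp
        closed_Collect_le continuous_on_product_coordinates continuous_on_const continuous_on_sum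
        continuous_on_mult_right) auto
  finally show ?thesis .
qed

lemma wsupp_set_wPol_subset_Pol:
  assumes "R \<in> \<Gamma>"
  shows "wsupp_set (wPol \<Gamma>) \<subseteq> Pol R"
proof -
  have "wsupp W \<subseteq> Pol R" if "W \<in> wPol \<Gamma>" for W
    using that assms by (auto simp: wPol_def improves_def)
  then show ?thesis
    unfolding wsupp_set_def all_projs_def using projs_subset_Pol[of _ R] by blast
qed

lemma wclone_wPol:
  fixes \<Gamma> :: "('a::finite) wrel set"
  assumes \<Gamma>: "\<Gamma> \<subseteq> wrels"
  shows "wclone (wPol \<Gamma>)"
proof -
  have mem: "(k, \<omega>) \<in> wPol \<Gamma> \<longleftrightarrow> is_weighting (k, \<omega>) \<and> (\<forall>R\<in>\<Gamma>. improves (k, \<omega>) R)" for k \<omega>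
    by (simp add: wPol_def weightings_def)
  have "(1, \<lambda>_. 0) \<in> wPol \<Gamma>"
    using is_weighting_zero[of 1] \<Gamma> by (auto simp: mem improves_iff)
  moreover have "(k, \<lambda>f. c * \<omega> f) \<in> wPol \<Gamma>" if "(k, \<omega>) \<in> wPol \<Gamma>" "0 \<le> c" for k \<omega> c
    using that \<Gamma> by (auto simp: mem is_weighting_scale improves_scale)
  moreover have "(k, \<lambda>f. \<omega>1 f + \<omega>2 f) \<in> wPol \<Gamma>"
    if "(k, \<omega>1) \<in> wPol \<Gamma>" "(k, \<omega>2) \<in> wPol \<Gamma>" for k \<omega>1 \<omega>2
    using that \<Gamma> by (auto simp: mem is_weighting_add improves_add)
  moreover have "wsup (n, \<mu>) gs l \<in> wPol \<Gamma>"
    if W: "(n, \<mu>) \<in> wPol \<Gamma>" and gs: "length gs = n" "set gs \<subseteq> wsupp_set (wPol \<Gamma>) \<inter> ops l"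
      and W': "is_weighting (wsup (n, \<mu>) gs l)" for n \<mu> gs l
  proof -
    have "improves (wsup (n, \<mu>) gs l) R" if "R \<in> \<Gamma>" for R
    proof (rule improves_wsup[OF _ _ _ _ gs(1) W'])
      show "set gs \<subseteq> Pol R \<inter> ops l" using wsupp_set_wPol_subset_Pol[OF that] gs(2) by blast
    qed (use that W \<Gamma> in \<open>auto simp: mem\<close>)
    then show ?thesis using W' by (simp add: wPol_def weightings_def)
  qed
  moreover have "closed {\<omega>. (k, \<omega>) \<in> wPol \<Gamma>}" for k
  proof -
    have "{\<omega>. (k, \<omega>) \<in> wPol \<Gamma>} = {\<omega>. is_weighting (k, \<omega>)} \<inter>
        (\<Inter>R\<in>\<Gamma>. {\<omega>. is_weighting (k, \<omega>) \<and> improves (k, \<omega>) R})"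
      by (auto simp: mem)
    also have "closed \<dots>"
      using \<Gamma> closed_improving by (intro closed_Int closed_INT ballI closed_weightings) blast
    finally show ?thesis .
  qed
  ultimately show ?thesis
    unfolding wclone_def by (auto simp: wPol_def split: prod.splits)
qed

lemma wClone_subset_wPol_Imp:
  fixes \<Omega> :: "('a::finite) weighting set"
  assumes "\<Omega> \<subseteq> weightings"
  shows "wClone \<Omega> \<subseteq> wPol (Imp \<Omega>)"
proof -
  have "wclone (wPol (Imp \<Omega>))" by (rule wclone_wPol) (auto simp: Imp_def)
  moreover have "\<Omega> \<subseteq> wPol (Imp \<Omega>)" using assms by (auto simp: wPol_def Imp_def)
  ultimately show ?thesis unfolding wClone_def by blast
qed

lemma wclone_weighting: "wclone C \<Longrightarrow> W \<in> C \<Longrightarrow> is_weighting W"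
  by (auto simp: wclone_def weightings_def)

lemma wclone_scale: "wclone C \<Longrightarrow> (n, \<mu>) \<in> C \<Longrightarrow> 0 \<le> c \<Longrightarrow> (n, \<lambda>f. c * \<mu> f) \<in> C"
  unfolding wclone_def by blast

lemma wclone_add: "wclone C \<Longrightarrow> (n, \<mu>1) \<in> C \<Longrightarrow> (n, \<mu>2) \<in> C \<Longrightarrow> (n, \<lambda>f. \<mu>1 f + \<mu>2 f) \<in> C"
  unfolding wclone_def by blast

lemma wclone_wsup:
  "wclone C \<Longrightarrow> W \<in> C \<Longrightarrow> 1 \<le> l \<Longrightarrow> length gs = fst W \<Longrightarrow> set gs \<subseteq> wsupp_set C \<inter> ops l
    \<Longrightarrow> is_weighting (wsup W gs l) \<Longrightarrow> wsup W gs l \<in> C"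
  unfolding wclone_def by blast

lemma wclone_closed: "wclone C \<Longrightarrow> closed {\<omega>. (n, \<omega>) \<in> C}"
  unfolding wclone_def by blast

lemma wclone_wsup_projs:
  fixes gs :: "('a::finite) oper list"
  assumes C: "wclone C" and "(n, \<mu>) \<in> C" "1 \<le> l" "length gs = n" "set gs \<subseteq> projs l"
  shows "wsup (n, \<mu>) gs l \<in> C"
proof (rule wclone_wsup[OF C assms(2,3)])
  show "set gs \<subseteq> wsupp_set C \<inter> ops l"
    using assms(5) projs_subset_ops[of l] projs_subset_all_projs[of l] by (auto simp: wsupp_set_def)
  show "is_weighting (wsup (n, \<mu>) gs l)"
    using is_weighting_wsup_projs wclone_weighting[OF C] assms by blast
qed (use assms in simp)

lemma wclone_zero:
  fixes C :: "('a::finite) weighting set"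
  assumes C: "wclone C" and "1 \<le> l"
  shows "(l, \<lambda>_. 0) \<in> C"
proof -
  obtain n \<mu> where "(n, \<mu>) \<in> C" using C by (auto simp: wclone_def)
  then have "(n, \<lambda>f. 0 * \<mu> f) \<in> C" using wclone_scale[OF C] by blast
  then have "wsup (n, \<lambda>_. 0) (replicate n (proj l 0)) l \<in> C"
    using assms by (intro wclone_wsup_projs) (auto simp: proj_in_projs)
  then show ?thesis by (simp add: wsup_def)
qed

section \<open>Weighted relations given by truth tables\<close>

(* A k-ary operation is encoded by its truth table, a tuple of arity |D|^k indexed by a fixed
   enumeration tuples k of D^k; applying an operation coordinatewise to truth tables is
   superposition (app_op_truth_table). table_wrel k S \<gamma> has as feasible tuples the truth tables
   of the operations h in S, with cost \<gamma> h. *)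

definition tuples :: "nat \<Rightarrow> ('a::finite) list list" where
  "tuples k = (SOME ts. set ts = {xs. length xs = k})"

lemma set_tuples: "set (tuples k) = {xs. length xs = k}"
proof -
  have "\<exists>ts. set ts = {xs::'a list. length xs = k}"
    using finite_list finite_lists_length_eq[of "UNIV::'a set" k] by simp
  then show ?thesis unfolding tuples_def by (rule someI_ex)
qed

lemma tuples_nonempty: "(tuples k :: ('a::finite) list list) \<noteq> []"
proof -
  have "replicate k undefined \<in> set (tuples k :: 'a list list)" by (simp add: set_tuples)
  then show ?thesis by auto
qed

definition truth_table :: "nat \<Rightarrow> ('a::finite) oper \<Rightarrow> 'a list" where
  "truth_table k f = map (snd f) (tuples k)"

lemma length_truth_table:
  fixes f :: "('a::finite) oper"
  shows "length (truth_table k f) = length (tuples k :: 'a list list)"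
  by (simp add: truth_table_def)

lemma inj_on_truth_table: "inj_on (truth_table k) (ops k :: ('a::finite) oper set)"
proof (rule inj_onI)
  fix f g :: "'a oper" assume "f \<in> ops k" "g \<in> ops k" "truth_table k f = truth_table k g"
  then show "f = g" using set_tuples[of k]
    by (intro ops_eqI[of f k g]) (auto simp: truth_table_def)
qed

lemma app_op_truth_table:
  fixes f :: "('a::finite) oper"
  shows "app_op f (length (tuples k :: 'a list list)) (map (truth_table k) gs) = truth_table k (comp_op f gs k)"
proof (rule nth_equalityI)
  fix j assume "j < length (app_op f (length (tuples k :: 'a list list)) (map (truth_table k) gs))"
  then have "j < length (tuples k :: 'a list list)" by (simp add: app_op_def)
  moreover from this have "length (tuples k ! j :: 'a list) = k" using set_tuples nth_mem by blast
  ultimately show "app_op f (length (tuples k :: 'a list list)) (map (truth_table k) gs) ! j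
      = truth_table k (comp_op f gs k) ! j"
    by (simp add: app_op_def truth_table_def comp_op_def o_def)
qed (simp add: app_op_def length_truth_table)

definition table_wrel :: "nat \<Rightarrow> ('a::finite) oper set \<Rightarrow> ('a oper \<Rightarrow> real) \<Rightarrow> 'a wrel" where
  "table_wrel k S \<gamma> = (length (tuples k :: 'a list list), \<lambda>y. if y \<in> truth_table k ` S
      then ereal (\<gamma> (the_inv_into S (truth_table k) y)) else \<infinity>)"

lemma table_wrel_in_wrels: "table_wrel k S \<gamma> \<in> wrels"
  using tuples_nonempty[of k] length_truth_table[of k]
  by (auto simp: table_wrel_def wrels_def Suc_le_eq)

lemma fst_table_wrel [simp]:
  fixes S :: "('a::finite) oper set"
  shows "fst (table_wrel k S \<gamma>) = length (tuples k :: 'a list list)"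
  by (simp add: table_wrel_def)

lemma feas_table_wrel: "feas (table_wrel k S \<gamma>) = truth_table k ` S"
  by (auto simp: feas_def table_wrel_def length_truth_table)

context
  fixes S :: "('a::finite) oper set" and k :: nat
  assumes S: "S \<subseteq> ops k"
begin

lemma inj_on_truth_table_subset: "inj_on (truth_table k) S"
  using inj_on_subset[OF inj_on_truth_table S] .

lemma table_wrel_truth_table: "h \<in> S \<Longrightarrow> snd (table_wrel k S \<gamma>) (truth_table k h) = ereal (\<gamma> h)"
  by (simp add: table_wrel_def the_inv_into_f_f[OF inj_on_truth_table_subset])

lemma subset_feas_table_wrel:
  assumes "set xs \<subseteq> feas (table_wrel k S \<gamma>)"
  obtains gs where "set gs \<subseteq> S" "xs = map (truth_table k) gs"
proof
  let ?gs = "map (the_inv_into S (truth_table k)) xs"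
  show "set ?gs \<subseteq> S"
    using assms the_inv_into_into[OF inj_on_truth_table_subset] by (auto simp: feas_table_wrel)
  show "xs = map (truth_table k) ?gs"
    unfolding map_map using assms f_the_inv_into_f[OF inj_on_truth_table_subset]
    by (intro map_idI[symmetric]) (auto simp: feas_table_wrel)
qed

lemma app_op_table_wrel:
  "app_op f (fst (table_wrel k S \<gamma>)) (map (truth_table k) gs) \<in> feas (table_wrel k S \<gamma>)
    \<longleftrightarrow> comp_op f gs k \<in> S"
  using inj_on_image_mem_iff[OF inj_on_truth_table comp_op_in_ops S]
  by (simp add: app_op_truth_table feas_table_wrel)

lemma cost_at_table_wrel:
  "comp_op f gs k \<in> S \<Longrightarrow> cost_at (table_wrel k S \<gamma>) f (map (truth_table k) gs) = \<gamma> (comp_op f gs k)"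
  by (simp add: cost_at_def app_op_truth_table table_wrel_truth_table)

lemma improves_table_wrel:
  assumes W: "is_weighting (n, \<phi>)"
    and closed: "\<And>f gs. f \<in> wsupp (n, \<phi>) \<Longrightarrow> set gs \<subseteq> S \<Longrightarrow> length gs = n \<Longrightarrow> comp_op f gs k \<in> S"
    and sep: "\<And>gs. set gs \<subseteq> S \<Longrightarrow> length gs = n \<Longrightarrow> (\<Sum>h\<in>ops k. snd (wsup (n, \<phi>) gs k) h * \<gamma> h) \<le> 0"
  shows "improves (n, \<phi>) (table_wrel k S \<gamma>)"
proof -
  let ?R = "table_wrel k S \<gamma>"
  have "wsupp (n, \<phi>) \<subseteq> Pol ?R"
  proof
    fix f assume f: "f \<in> wsupp (n, \<phi>)"
    show "f \<in> Pol ?R" unfolding Pol_iff[OF wsupp_subset_ops[OF W, THEN subsetD, OF f]]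
    proof (intro allI impI)
      fix xs assume xs: "length xs = n" "set xs \<subseteq> feas ?R"
      obtain gs where "set gs \<subseteq> S" "xs = map (truth_table k) gs"
        using xs(2) by (rule subset_feas_table_wrel)
      then show "app_op f (fst ?R) xs \<in> feas ?R" using app_op_table_wrel closed[OF f] xs(1) by simp
    qed
  qed
  then have "\<forall>f\<in>ops n. f \<notin> Pol ?R \<longrightarrow> \<phi> f \<le> 0" unfolding wsupp_def by (auto intro: leI)
  moreover have "(\<Sum>f\<in>ops n. \<phi> f * cost_at ?R f xs) \<le> 0"
    if xs: "length xs = n" "set xs \<subseteq> feas ?R" for xs
  proof -
    obtain gs where gs: "set gs \<subseteq> S" "xs = map (truth_table k) gs"
      using xs(2) by (rule subset_feas_table_wrel)
    have "\<phi> f * cost_at ?R f xs = \<phi> f * \<gamma> (comp_op f gs k)" for f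
      using gs closed[of f gs] xs(1) cost_at_table_wrel weighting_eq_0_off_wsupp[OF W, of f]
      by (cases "f \<in> wsupp (n, \<phi>)") auto
    then have "(\<Sum>f\<in>ops n. \<phi> f * cost_at ?R f xs) = (\<Sum>f\<in>ops n. \<phi> f * \<gamma> (comp_op f gs k))"
      by (simp only:)
    also have "\<dots> = (\<Sum>h\<in>ops k. snd (wsup (n, \<phi>) gs k) h * \<gamma> h)"
      by (rule sum_wsup_times[symmetric])
    also have "\<dots> \<le> 0" using sep gs xs(1) by simp
    finally show ?thesis .
  qed
  ultimately show ?thesis using improves_iff[OF W table_wrel_in_wrels] by blast
qed

lemma not_improves_table_wrel:
  assumes W: "is_weighting (k, \<omega>)" and "projs k \<subseteq> S" and pos: "0 < (\<Sum>f\<in>ops k. \<omega> f * \<gamma> f)"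
  shows "\<not> improves (k, \<omega>) (table_wrel k S \<gamma>)"
proof
  let ?R = "table_wrel k S \<gamma>"
  assume "improves (k, \<omega>) ?R"
  then have pol: "\<And>f. f \<in> ops k \<Longrightarrow> f \<notin> Pol ?R \<Longrightarrow> \<omega> f \<le> 0"
    and sum: "\<And>xs. length xs = k \<Longrightarrow> set xs \<subseteq> feas ?R \<Longrightarrow> (\<Sum>f\<in>ops k. \<omega> f * cost_at ?R f xs) \<le> 0"
    using improves_iff[OF W table_wrel_in_wrels] by blast+
  define es :: "'a oper list" where "es = map (proj k) [0..<k]"
  have es: "set es \<subseteq> S" "length es = k"
    using \<open>projs k \<subseteq> S\<close> proj_in_projs[of _ k] unfolding es_def by force+
  then have feas: "set (map (truth_table k) es) \<subseteq> feas ?R" by (auto simp: feas_table_wrel)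
  have es_id: "comp_op f es k = f" if "f \<in> ops k" for f
    unfolding es_def by (rule comp_op_projs_right[OF that])
  have "\<omega> f * cost_at ?R f (map (truth_table k) es) = \<omega> f * \<gamma> f" if "f \<in> ops k" for f
  proof (cases "f \<in> S")
    case True
    then show ?thesis using cost_at_table_wrel[of f es \<gamma>] es_id[OF that] by simp
  next
    case False
    have "f \<notin> Pol ?R"
    proof
      assume "f \<in> Pol ?R"
      then have "app_op f (fst ?R) (map (truth_table k) es) \<in> feas ?R"
        using Pol_iff[OF that] feas es(2) by simp
      then show False using app_op_table_wrel es_id[OF that] False by simp
    qed
    then have "\<omega> f = 0"
      using pol[OF that] weighting_nonneg[OF W, of f] False \<open>projs k \<subseteq> S\<close> by force
    then show ?thesis by simp
  qed
  then have "(\<Sum>f\<in>ops k. \<omega> f * cost_at ?R f (map (truth_table k) es)) = (\<Sum>f\<in>ops k. \<omega> f * \<gamma> f)"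
    by (rule sum.cong[OF refl])
  then show False using sum[OF _ feas] es(2) pos by simp
qed

end

section \<open>Every weighted clone containing \<Omega> contains wPol (Imp \<Omega>)\<close>

context
  fixes C :: "('a::finite) weighting set" and k :: nat
  assumes C: "wclone C" and k: "1 \<le> k"
begin

definition supp_ops :: "'a oper set" where
  "supp_ops = wsupp_set C \<inter> ops k"

lemma supp_ops_subset_ops: "supp_ops \<subseteq> ops k"
  by (auto simp: supp_ops_def)

lemma finite_supp_ops: "finite supp_ops"
  using finite_subset[OF supp_ops_subset_ops finite_ops] .

lemma projs_subset_supp_ops: "projs k \<subseteq> supp_ops"
  using projs_subset_ops projs_subset_all_projs by (auto simp: supp_ops_def wsupp_set_def)

definition sup_cone :: "('a oper \<Rightarrow> real) set" where
  "sup_cone = {snd (wsup W gs k) | W gs. W \<in> C \<and> set gs \<subseteq> supp_ops \<and> length gs = fst W}"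

lemma sup_coneI: "(n, \<mu>) \<in> C \<Longrightarrow> set gs \<subseteq> supp_ops \<Longrightarrow> length gs = n \<Longrightarrow> snd (wsup (n, \<mu>) gs k) \<in> sup_cone"
  unfolding sup_cone_def by force

lemma sup_coneE:
  assumes "\<nu> \<in> sup_cone"
  obtains n \<mu> gs where "(n, \<mu>) \<in> C" "set gs \<subseteq> supp_ops" "length gs = n" "\<nu> = snd (wsup (n, \<mu>) gs k)"
  using assms unfolding sup_cone_def by force

lemma sup_cone_eq_0_off_ops: "\<nu> \<in> sup_cone \<Longrightarrow> f \<notin> ops k \<Longrightarrow> \<nu> f = 0"
  by (auto elim: sup_coneE simp: wsup_eq_0_off_ops)

lemma sum_sup_cone: "\<nu> \<in> sup_cone \<Longrightarrow> sum \<nu> (ops k) = 0"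
  by (auto elim!: sup_coneE simp: sum_wsup dest!: wclone_weighting[OF C] is_weightingD(3))

lemma sup_cone_nonneg_off: "\<nu> \<in> sup_cone \<Longrightarrow> h \<notin> supp_ops \<Longrightarrow> 0 \<le> \<nu> h"
  by (erule sup_coneE) (use wsup_nonneg_off wclone_weighting[OF C] supp_ops_subset_ops in blast)

lemma wclone_in_sup_cone: "(k, \<kappa>) \<in> C \<Longrightarrow> \<kappa> \<in> sup_cone"
  using sup_coneI[of k \<kappa> "map (proj k) [0..<k]"] projs_subset_supp_ops proj_in_projs
    wsup_projs_right[OF wclone_weighting[OF C]] by fastforce

lemma sup_cone_scale:
  assumes "\<nu> \<in> sup_cone" "0 \<le> c"
  shows "(\<lambda>f. c * \<nu> f) \<in> sup_cone"
proof -
  obtain n \<mu> gs where W: "(n, \<mu>) \<in> C" "set gs \<subseteq> supp_ops" "length gs = n"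
    and \<nu>: "\<nu> = snd (wsup (n, \<mu>) gs k)" using assms(1) by (rule sup_coneE)
  show ?thesis using sup_coneI[OF wclone_scale[OF C W(1) assms(2)] W(2,3)] \<nu> by (simp add: wsup_scale)
qed

(* Both summands are first made (n1 + n2)-ary by superposing with projections. *)

lemma sup_cone_add:
  assumes "\<nu>1 \<in> sup_cone" "\<nu>2 \<in> sup_cone"
  shows "(\<lambda>f. \<nu>1 f + \<nu>2 f) \<in> sup_cone"
proof -
  obtain n1 \<mu>1 gs1 where 1: "(n1, \<mu>1) \<in> C" "set gs1 \<subseteq> supp_ops" "length gs1 = n1"
    "\<nu>1 = snd (wsup (n1, \<mu>1) gs1 k)" using assms(1) by (rule sup_coneE)
  obtain n2 \<mu>2 gs2 where 2: "(n2, \<mu>2) \<in> C" "set gs2 \<subseteq> supp_ops" "length gs2 = n2"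
    "\<nu>2 = snd (wsup (n2, \<mu>2) gs2 k)" using assms(2) by (rule sup_coneE)
  define N where "N = n1 + n2"
  define gs where "gs = gs1 @ gs2"
  define \<phi>1 where "\<phi>1 = snd (wsup (n1, \<mu>1) (map (\<lambda>i. proj N i) [0..<n1]) N)"
  define \<phi>2 where "\<phi>2 = snd (wsup (n2, \<mu>2) (map (\<lambda>i. proj N (n1 + i)) [0..<n2]) N)"
  have N: "1 \<le> N" using is_weightingD(1)[OF wclone_weighting[OF C 1(1)]] by (simp add: N_def)
  have gs: "length gs = N" "set gs \<subseteq> supp_ops" "set gs \<subseteq> ops k"
    using 1 2 supp_ops_subset_ops by (auto simp: gs_def N_def)
  have hs: "set (map (\<lambda>i. proj N i) [0..<n1]) \<subseteq> projs N"
    "set (map (\<lambda>i. proj N (n1 + i)) [0..<n2]) \<subseteq> projs N"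
    by (force simp: N_def projs_def)+
  have "(N, \<phi>1) \<in> C" "(N, \<phi>2) \<in> C"
    unfolding \<phi>1_def \<phi>2_def fst_wsup[symmetric]
    using wclone_wsup_projs[OF C 1(1) N _ hs(1)] wclone_wsup_projs[OF C 2(1) N _ hs(2)] by simp_all
  then have "(N, \<lambda>f. \<phi>1 f + \<phi>2 f) \<in> C" by (intro wclone_add[OF C])
  moreover have "snd (wsup (N, \<phi>1) gs k) = \<nu>1"
  proof -
    have "map (\<lambda>i. gs ! i) [0..<n1] = gs1" using 1(3) by (auto simp: gs_def nth_append intro: nth_equalityI)
    then show ?thesis
      using wsup_reindex[OF gs(1,3), of n1 "\<lambda>i. i" "(n1, \<mu>1)"] 1(4)
      by (simp add: \<phi>1_def N_def flip: fst_wsup)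
  qed
  moreover have "snd (wsup (N, \<phi>2) gs k) = \<nu>2"
  proof -
    have "map (\<lambda>i. gs ! (n1 + i)) [0..<n2] = gs2" using 1(3) 2(3) by (auto simp: gs_def nth_append intro: nth_equalityI)
    then show ?thesis
      using wsup_reindex[OF gs(1,3), of n2 "\<lambda>i. n1 + i" "(n2, \<mu>2)"] 2(4)
      by (simp add: \<phi>2_def N_def flip: fst_wsup)
  qed
  ultimately show ?thesis
    using sup_coneI[OF _ gs(2,1), of "\<lambda>f. \<phi>1 f + \<phi>2 f"] by (simp add: wsup_add)
qed

lemma sup_cone_weighting_in_wclone:
  assumes "\<nu> \<in> sup_cone" "is_weighting (k, \<nu>)"
  shows "(k, \<nu>) \<in> C"
proof -
  obtain n \<mu> gs where W: "(n, \<mu>) \<in> C" "set gs \<subseteq> supp_ops" "length gs = n"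
    and \<nu>: "\<nu> = snd (wsup (n, \<mu>) gs k)" using assms(1) by (rule sup_coneE)
  then have eq: "wsup (n, \<mu>) gs k = (k, \<nu>)" by (simp flip: fst_wsup)
  have "set gs \<subseteq> wsupp_set C \<inter> ops k" using W(2) by (simp add: supp_ops_def)
  then have "wsup (n, \<mu>) gs k \<in> C"
    using wclone_wsup[OF C W(1) k, of gs] W(3) assms(2) eq by simp
  then show ?thesis using eq by simp
qed

lemma supp_ops_weighting_pos:
  assumes "h \<in> supp_ops" "h \<notin> projs k"
  obtains \<rho> where "(k, \<rho>) \<in> C" "0 < \<rho> h"
proof -
  have h: "h \<in> ops k" using assms(1) supp_ops_subset_ops by blast
  then have "h \<notin> all_projs" using all_projs_Int_ops assms(2) by blast
  then obtain n \<phi> where W: "(n, \<phi>) \<in> C" "h \<in> wsupp (n, \<phi>)"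
    using assms(1) by (auto simp: supp_ops_def wsupp_set_def)
  have "h \<in> ops n" using wsupp_subset_ops[OF wclone_weighting[OF C W(1)]] W(2) by blast
  then have "n = k" using h ops_fst by metis
  then show thesis using that W assms(2) by (auto simp: wsupp_def)
qed

lemma wclone_weighting_pos_on:
  "finite A \<Longrightarrow> A \<subseteq> supp_ops - projs k \<Longrightarrow> \<exists>\<rho>. (k, \<rho>) \<in> C \<and> (\<forall>h\<in>A. 0 < \<rho> h)"
proof (induction A rule: finite_induct)
  case empty
  then show ?case using wclone_zero[OF C k] by blast
next
  case (insert x A)
  then obtain \<rho>1 where \<rho>1: "(k, \<rho>1) \<in> C" "\<forall>h\<in>A. 0 < \<rho>1 h" by blast
  obtain \<rho>2 where \<rho>2: "(k, \<rho>2) \<in> C" "0 < \<rho>2 x"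
    using insert.prems supp_ops_weighting_pos by blast
  have "0 < \<rho>1 h + \<rho>2 h" if "h \<in> insert x A" for h
    using that insert.prems \<rho>1 \<rho>2 weighting_nonneg[OF wclone_weighting[OF C \<rho>1(1)], of h]
      weighting_nonneg[OF wclone_weighting[OF C \<rho>2(1)], of h]
    by (auto simp: add_pos_nonneg add_nonneg_pos)
  then show ?case using wclone_add[OF C \<rho>1(1) \<rho>2(1)] by blast
qed

definition pos_weighting :: "'a oper \<Rightarrow> real" where
  "pos_weighting = (SOME \<rho>. (k, \<rho>) \<in> C \<and> (\<forall>h\<in>supp_ops - projs k. 0 < \<rho> h))"

lemma pos_weighting: "(k, pos_weighting) \<in> C" "h \<in> supp_ops - projs k \<Longrightarrow> 0 < pos_weighting h"
proof -
  have "\<exists>\<rho>. (k, \<rho>) \<in> C \<and> (\<forall>h\<in>supp_ops - projs k. 0 < \<rho> h)"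
    using wclone_weighting_pos_on finite_supp_ops by blast
  from someI_ex[OF this] show "(k, pos_weighting) \<in> C" "h \<in> supp_ops - projs k \<Longrightarrow> 0 < pos_weighting h"
    unfolding pos_weighting_def by blast+
qed

lemma pos_weighting_nonneg: "h \<notin> projs k \<Longrightarrow> 0 \<le> pos_weighting h"
  using weighting_nonneg[OF wclone_weighting[OF C pos_weighting(1)]] .

(* Adding the least multiple of pos_weighting that makes every weight on supp_ops - projs k
   nonnegative turns each member of sup_cone into a weighting of the clone, depends continuously
   on it, and leaves weightings unchanged. *)

definition lift_coeff :: "('a oper \<Rightarrow> real) \<Rightarrow> real" where
  "lift_coeff \<nu> = (\<Sum>h\<in>supp_ops - projs k. max 0 (- \<nu> h / pos_weighting h))"

definition lift :: "('a oper \<Rightarrow> real) \<Rightarrow> 'a oper \<Rightarrow> real" where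
  "lift \<nu> = (\<lambda>f. \<nu> f + lift_coeff \<nu> * pos_weighting f)"

lemma lift_coeff_nonneg: "0 \<le> lift_coeff \<nu>"
  unfolding lift_coeff_def by (intro sum_nonneg) auto

lemma lift_nonneg_on:
  assumes h: "h \<in> supp_ops - projs k"
  shows "0 \<le> lift \<nu> h"
proof -
  have "- \<nu> h / pos_weighting h \<le> lift_coeff \<nu>"
    unfolding lift_coeff_def using finite_supp_ops h
    by (intro order.trans[OF _ member_le_sum[OF h]]) auto
  then have "- \<nu> h / pos_weighting h * pos_weighting h \<le> lift_coeff \<nu> * pos_weighting h"
    using pos_weighting(2)[OF h] by (intro mult_right_mono) auto
  then show ?thesis using pos_weighting(2)[OF h] by (simp add: lift_def)
qed

lemma lift_in_wclone:
  assumes \<nu>: "\<nu> \<in> sup_cone"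
  shows "(k, lift \<nu>) \<in> C"
proof (rule sup_cone_weighting_in_wclone)
  show "lift \<nu> \<in> sup_cone"
    unfolding lift_def using sup_cone_add[OF \<nu> sup_cone_scale] wclone_in_sup_cone pos_weighting(1)
      lift_coeff_nonneg by blast
  have \<rho>: "is_weighting (k, pos_weighting)" using wclone_weighting[OF C pos_weighting(1)] .
  show "is_weighting (k, lift \<nu>)"
  proof (rule is_weightingI[OF k])
    show "lift \<nu> f = 0" if "f \<notin> ops k" for f
      using sup_cone_eq_0_off_ops[OF \<nu> that] is_weightingD(2)[OF \<rho> that] by (simp add: lift_def)
    show "sum (lift \<nu>) (ops k) = 0"
      using sum_sup_cone[OF \<nu>] is_weightingD(3)[OF \<rho>]
      by (simp add: lift_def sum.distrib sum_distrib_left[symmetric])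
    show "0 \<le> lift \<nu> f" if "f \<notin> projs k" for f
      using lift_nonneg_on[of f] sup_cone_nonneg_off[OF \<nu>, of f] pos_weighting_nonneg[OF that]
        lift_coeff_nonneg[of \<nu>] that
      by (cases "f \<in> supp_ops") (auto simp: lift_def)
  qed
qed

lemma continuous_on_lift: "continuous_on UNIV lift"
  unfolding lift_def lift_coeff_def
  by (intro continuous_on_coordinatewise_then_product continuous_intros)
    (use pos_weighting(2) in force)+

lemma lift_weighting: "is_weighting (k, \<omega>) \<Longrightarrow> lift \<omega> = \<omega>"
  using pos_weighting(2) weighting_nonneg[of k \<omega>]
  by (auto simp: lift_def lift_coeff_def divide_nonneg_pos intro!: sum.neutral)

lemma closure_sup_cone_weighting_in_wclone:
  assumes "is_weighting (k, \<omega>)" "\<omega> \<in> closure sup_cone"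
  shows "(k, \<omega>) \<in> C"
proof -
  have "lift ` closure sup_cone \<subseteq> {\<omega>. (k, \<omega>) \<in> C}"
  proof (rule image_closure_subset)
    show "continuous_on (closure sup_cone) lift"
      using continuous_on_lift by (rule continuous_on_subset) simp
    show "closed {\<omega>. (k, \<omega>) \<in> C}" by (rule wclone_closed[OF C])
    show "lift ` sup_cone \<subseteq> {\<omega>. (k, \<omega>) \<in> C}" using lift_in_wclone by blast
  qed
  then have "(k, lift \<omega>) \<in> C" using assms(2) by blast
  then show ?thesis using lift_weighting[OF assms(1)] by simp
qed

(* If f is not a projection, comp_op f gs k carries positive weight in the superposition by gs,
   and the lift keeps it positive in a weighting of the clone. *)

lemma comp_op_in_supp_ops:
  assumes W: "(n, \<phi>) \<in> C" and f: "f \<in> wsupp (n, \<phi>)" and gs: "set gs \<subseteq> supp_ops" "length gs = n"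
  shows "comp_op f gs k \<in> supp_ops"
proof -
  have w: "is_weighting (n, \<phi>)" using wclone_weighting[OF C W] .
  have gs_ops: "set gs \<subseteq> ops k" using gs(1) supp_ops_subset_ops by blast
  define h where "h = comp_op f gs k"
  show ?thesis
  proof (cases "f \<in> projs n \<or> h \<in> set gs \<or> h \<in> projs k")
    case True
    then consider (proj) i where "i < n" "f = proj n i" | "h \<in> set gs" | "h \<in> projs k"
      by (auto simp: projs_def)
    then show ?thesis
    proof cases
      case proj
      then have "gs ! i \<in> supp_ops" using gs by (metis nth_mem subsetD)
      moreover have "gs ! i \<in> ops k" using calculation supp_ops_subset_ops by blast
      ultimately show ?thesis using proj comp_op_proj[of i gs k] gs(2) by (simp add: h_def)
    qed (use gs(1) projs_subset_supp_ops h_def in blast)+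
  next
    case False
    define \<nu> where "\<nu> = snd (wsup (n, \<phi>) gs k)"
    have "0 < \<phi> f" using f False by (auto simp: wsupp_def)
    also have "\<phi> f \<le> \<nu> h"
      unfolding \<nu>_def wsup_def snd_conv
      using wsupp_subset_ops[OF w] f False wsup_fiber_nonneg[OF w gs(2) gs_ops]
      by (intro member_le_sum) (auto simp: h_def intro: finite_subset[OF _ finite_ops])
    also have "\<nu> h \<le> lift \<nu> h"
      using lift_coeff_nonneg pos_weighting_nonneg False by (simp add: lift_def)
    finally have "h \<in> wsupp (k, lift \<nu>)" by (simp add: wsupp_def)
    moreover have "(k, lift \<nu>) \<in> C" using lift_in_wclone sup_coneI[OF W gs] by (simp add: \<nu>_def)
    ultimately show ?thesis
      using comp_op_in_ops[of f gs k] by (auto simp: supp_ops_def wsupp_set_def h_def)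
  qed
qed

lemma table_wrel_in_Imp:
  assumes "\<Omega> \<subseteq> C" and sep: "\<And>\<nu>. \<nu> \<in> sup_cone \<Longrightarrow> (\<Sum>h\<in>ops k. \<nu> h * \<gamma> h) \<le> 0"
  shows "table_wrel k supp_ops \<gamma> \<in> Imp \<Omega>"
proof -
  have "improves (n, \<phi>) (table_wrel k supp_ops \<gamma>)" if "(n, \<phi>) \<in> \<Omega>" for n \<phi>
  proof (rule improves_table_wrel[OF supp_ops_subset_ops])
    have W: "(n, \<phi>) \<in> C" using that assms(1) by blast
    then show "is_weighting (n, \<phi>)" by (rule wclone_weighting[OF C])
    show "comp_op f gs k \<in> supp_ops"
      if "f \<in> wsupp (n, \<phi>)" "set gs \<subseteq> supp_ops" "length gs = n" for f gs
      using comp_op_in_supp_ops[OF W that] .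
    show "(\<Sum>h\<in>ops k. snd (wsup (n, \<phi>) gs k) h * \<gamma> h) \<le> 0"
      if "set gs \<subseteq> supp_ops" "length gs = n" for gs
      using sep sup_coneI[OF W that] by blast
  qed
  then show ?thesis by (auto simp: Imp_def table_wrel_in_wrels)
qed

lemma wPol_Imp_in_wclone:
  assumes "\<Omega> \<subseteq> C" and \<omega>: "(k, \<omega>) \<in> wPol (Imp \<Omega>)"
  shows "(k, \<omega>) \<in> C"
proof (rule ccontr)
  assume "(k, \<omega>) \<notin> C"
  have W: "is_weighting (k, \<omega>)" using \<omega> by (simp add: wPol_def weightings_def)
  then have "\<omega> \<notin> closure sup_cone"
    using \<open>(k, \<omega>) \<notin> C\<close> closure_sup_cone_weighting_in_wclone by blast
  obtain \<gamma> where sep: "\<And>\<nu>. \<nu> \<in> sup_cone \<Longrightarrow> (\<Sum>h\<in>ops k. \<nu> h * \<gamma> h) \<le> 0"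
    and pos: "0 < (\<Sum>h\<in>ops k. \<omega> h * \<gamma> h)"
  proof (rule separation_closed_cone[where X = "ops k" and K = sup_cone and z = \<omega>])
    show "(\<lambda>_. 0) \<in> sup_cone" using wclone_in_sup_cone[OF wclone_zero[OF C k]] .
  qed (use finite_ops sup_cone_eq_0_off_ops sup_cone_add sup_cone_scale is_weightingD(2)[OF W]
      \<open>\<omega> \<notin> closure sup_cone\<close> that in auto)
  have "improves (k, \<omega>) (table_wrel k supp_ops \<gamma>)"
    using \<omega> table_wrel_in_Imp[OF assms(1) sep] by (simp add: wPol_def)
  then show False
    using not_improves_table_wrel[OF supp_ops_subset_ops W projs_subset_supp_ops pos] by blast
qed

end

lemma wPol_Imp_subset_wclone:
  fixes \<Omega> :: "('a::finite) weighting set"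
  assumes "wclone C" "\<Omega> \<subseteq> C"
  shows "wPol (Imp \<Omega>) \<subseteq> C"
proof
  fix W assume "W \<in> wPol (Imp \<Omega>)"
  moreover obtain k \<omega> where "W = (k, \<omega>)" by fastforce
  moreover from calculation have "1 \<le> k"
    using is_weightingD(1) by (auto simp: wPol_def weightings_def)
  ultimately show "W \<in> C" using wPol_Imp_in_wclone[OF assms(1) _ assms(2)] by blast
qed

theorem theorem7:
  fixes \<Omega> :: "('a::finite) weighting set"
  assumes "CARD('a) \<ge> 2"
    and "\<Omega> \<subseteq> weightings"
  shows "wPol (Imp \<Omega>) = wClone \<Omega>"
proof
  show "wPol (Imp \<Omega>) \<subseteq> wClone \<Omega>"
    unfolding wClone_def using wPol_Imp_subset_wclone by blast
  show "wClone \<Omega> \<subseteq> wPol (Imp \<Omega>)" using wClone_subset_wPol_Imp[OF assms(2)] .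
qed

end
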